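(* For every item sequence $I\in(0,1]^n$, $MM_2(I)=OPT_2(I)$.
   Context: The $k$-cardinality constrained bin packing problem: an item sequence $I=(a_1,\dots,a_n)\in(0,1]^n$ must be packed into bins of capacity $1$ so that each bin contains at most $k$ items; $OPT_k(I)$ is the minimum possible number of non-empty bins, and $ALG(I)$ is the number of non-empty bins used by algorithm $ALG$. Algorithm $MM_k$: sort the items in non-increasing order; keep a single open bin with load $S$. Repeat while items remain: if the open bin already contains $k$ items, close it and open a new bin; else if the head (largest remaining) item fits ($S+\text{head}\le1$) pack it; else if the tail (smallest remaining) item fits pack it; else close the open bin permanently and open a new empty bin. $MM_2$ is the case $k=2$. *)

theory Defs
  imports Main "HOL.Real"
begin

definition valid_packing :: "nat \<Rightarrow> real list \<Rightarrow> (nat \<Rightarrow> nat) \<Rightarrow> bool" where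
  "valid_packing k I f \<longleftrightarrow>
     (\<forall>b. card {i. i < length I \<and> f i = b} \<le> k
        \<and> (\<Sum>i\<in>{i. i < length I \<and> f i = b}. I ! i) \<le> 1)"

definition OPT :: "nat \<Rightarrow> real list \<Rightarrow> nat" where
  "OPT k I = (LEAST m. \<exists>f. valid_packing k I f \<and> card (f ` {..<length I}) = m)"

text \<open>Arguments: k, remaining items (sorted non-increasingly),
  number c of items in the open bin, load S of the open bin.
  Result: number of non-empty bins used from this state on (including the open bin).
  The branch "c = 0 and nothing fits" is unreachable for items in (0,1]
  (an empty bin of load 0 always accepts the head); it only ensures totality.\<close>
function mm_loop :: "nat \<Rightarrow> real list \<Rightarrow> nat \<Rightarrow> real \<Rightarrow> nat" where
  "mm_loop k xs c S =
    (if xs = [] then (if 0 < c then 1 else 0)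
     else if k \<le> c \<and> 0 < c then 1 + mm_loop k xs 0 0
     else if S + hd xs \<le> 1 then mm_loop k (tl xs) (Suc c) (S + hd xs)
     else if S + last xs \<le> 1 then mm_loop k (butlast xs) (Suc c) (S + last xs)
     else if 0 < c then 1 + mm_loop k xs 0 0
     else 0)"
  by pat_completeness auto
termination
  by (relation "measures [\<lambda>(k,xs,c,S). length xs, \<lambda>(k,xs,c,S). if 0 < c then 1 else 0]")
     (auto simp: length_greater_0_conv)

definition MM :: "nat \<Rightarrow> real list \<Rightarrow> nat" where
  "MM k I = mm_loop k (rev (sort I)) 0 0"

end

theory Submission
  imports Defs "HOL-Combinatorics.List_Permutation"
begin

text \<open>
  On a non-increasing list the algorithm either pairs the two largest items, or pairs the
  largest item a with the smallest one, or leaves a alone. In the first case all pairs of items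
  fit together, so it uses \<lceil>n/2\<rceil> bins, which no packing with two items per bin can beat.
  Otherwise an optimal packing can be assumed to treat a in the same way: if a does not fit
  with the smallest item it is alone in every packing, and if a shares a bin with some item j,
  exchanging j with the smallest item keeps the packing feasible. Induction on the length gives
  optimality on sorted lists, and OPT is invariant under permuting the items.
\<close>

section \<open>Packings with at most k items per bin\<close>

lemma valid_packing_pair_le:
  assumes "valid_packing k xs f" "set xs \<subseteq> {0..}"
    and "i < length xs" "j < length xs" "i \<noteq> j" "f i = f j"
  shows "xs ! i + xs ! j \<le> 1"
proof -
  let ?B = "{p. p < length xs \<and> f p = f i}"
  have "xs ! i + xs ! j = (\<Sum>p\<in>{i, j}. xs ! p)" using assms(5) by simp
  also have "\<dots> \<le> (\<Sum>p\<in>?B. xs ! p)"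
    using assms(2-6) by (intro sum_mono2) (auto dest: nth_mem)
  also have "\<dots> \<le> 1" using assms(1) unfolding valid_packing_def by blast
  finally show ?thesis .
qed

lemma valid_packing_reindex:
  assumes "valid_packing k xs f" "set xs \<subseteq> {0..}"
    and "inj_on s {..<length ys}" "s ` {..<length ys} \<subseteq> {..<length xs}"
    and "\<And>i. i < length ys \<Longrightarrow> ys ! i = xs ! s i"
  shows "valid_packing k ys (f \<circ> s)"
  unfolding valid_packing_def
proof (intro allI conjI)
  fix b
  let ?B' = "{i. i < length ys \<and> (f \<circ> s) i = b}" and ?B = "{p. p < length xs \<and> f p = b}"
  have inj: "inj_on s ?B'" using assms(3) by (rule inj_on_subset) auto
  have sub: "s ` ?B' \<subseteq> ?B" using assms(4) by auto
  have "card ?B' = card (s ` ?B')" using inj by (simp add: card_image)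
  also have "\<dots> \<le> card ?B" using sub by (intro card_mono) auto
  also have "\<dots> \<le> k" using assms(1) unfolding valid_packing_def by blast
  finally show "card ?B' \<le> k" .
  have "(\<Sum>i\<in>?B'. ys ! i) = (\<Sum>i\<in>?B'. xs ! s i)" using assms(5) by simp
  also have "\<dots> = (\<Sum>p\<in>s ` ?B'. xs ! p)" using inj by (simp add: sum.reindex)
  also have "\<dots> \<le> (\<Sum>p\<in>?B. xs ! p)"
    using sub assms(2) by (intro sum_mono2) (auto dest: nth_mem)
  also have "\<dots> \<le> 1" using assms(1) unfolding valid_packing_def by blast
  finally show "(\<Sum>i\<in>?B'. ys ! i) \<le> 1" .
qed

lemma valid_packing_mset_eq:
  assumes "mset xs = mset ys" "set xs \<subseteq> {0..}" "valid_packing k xs f"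
  shows "\<exists>g. valid_packing k ys g \<and> g ` {..<length ys} = f ` {..<length xs}"
proof -
  obtain p where p: "bij_betw p {..<length ys} {..<length xs}" "\<forall>i<length ys. ys ! i = xs ! p i"
    using permutation_Ex_bij[of ys xs] assms(1) by auto
  have "valid_packing k ys (f \<circ> p)"
    using p by (intro valid_packing_reindex[OF assms(3,2)]) (auto simp: bij_betw_def)
  moreover have "(f \<circ> p) ` {..<length ys} = f ` {..<length xs}"
    unfolding image_comp[symmetric] using p(1) by (simp add: bij_betw_def)
  ultimately show ?thesis by blast
qed

lemma valid_packing_append_bin:
  assumes "valid_packing k ys g" "zs \<noteq> []" "length zs \<le> k" "sum_list zs \<le> 1"
  shows "\<exists>h. valid_packing k (ys @ zs) h
    \<and> card (h ` {..<length (ys @ zs)}) = Suc (card (g ` {..<length ys}))"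
proof -
  define h where "h i = (if i < length ys then Suc (g i) else 0)" for i
  have "valid_packing k (ys @ zs) h"
    unfolding valid_packing_def
  proof (intro allI)
    fix b
    let ?B = "{i. i < length (ys @ zs) \<and> h i = b}"
    show "card ?B \<le> k \<and> (\<Sum>i\<in>?B. (ys @ zs) ! i) \<le> 1"
    proof (cases b)
      case 0
      then have B: "?B = {length ys..<length ys + length zs}" by (auto simp: h_def)
      have "(\<Sum>i\<in>?B. (ys @ zs) ! i) = (\<Sum>i<length zs. zs ! i)"
        unfolding B by (rule sum.reindex_bij_witness[of _ "\<lambda>i. i + length ys" "\<lambda>i. i - length ys"])
          (auto simp: nth_append)
      also have "\<dots> = sum_list zs" by (simp add: sum_list_sum_nth atLeast0LessThan)
      finally show ?thesis using B assms(3,4) by simp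
    next
      case (Suc c)
      then have B: "?B = {i. i < length ys \<and> g i = c}" by (auto simp: h_def)
      have "(\<Sum>i\<in>?B. (ys @ zs) ! i) = (\<Sum>i\<in>?B. ys ! i)" unfolding B by (simp add: nth_append)
      then show ?thesis using assms(1) unfolding B valid_packing_def by simp
    qed
  qed
  moreover have "h ` {..<length (ys @ zs)} = insert 0 (Suc ` g ` {..<length ys})"
  proof -
    have "{..<length (ys @ zs)} = {..<length ys} \<union> {length ys..<length (ys @ zs)}" by auto
    moreover have "h ` {..<length ys} = Suc ` g ` {..<length ys}" by (auto simp: h_def)
    moreover have "h ` {length ys..<length (ys @ zs)} = {0}"
      using assms(2) by (auto simp: h_def image_iff) (metis le_refl length_greater_0_conv less_add_same_cancel1)
    ultimately show ?thesis by (simp add: image_Un)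
  qed
  then have "card (h ` {..<length (ys @ zs)}) = Suc (card (g ` {..<length ys}))"
    by (simp add: card_image)
  ultimately show ?thesis by blast
qed

lemma valid_packing_singletons:
  assumes "0 < k" "set xs \<subseteq> {..1}"
  shows "valid_packing k xs id"
  unfolding valid_packing_def
proof (intro allI conjI)
  fix b
  have B: "{i. i < length xs \<and> id i = b} = (if b < length xs then {b} else {})" by auto
  show "card {i. i < length xs \<and> id i = b} \<le> k" unfolding B using assms(1) by simp
  show "(\<Sum>i\<in>{i. i < length xs \<and> id i = b}. xs ! i) \<le> 1"
    unfolding B using assms(2) by (auto dest: nth_mem)
qed

lemma length_le_card_bins:
  assumes "valid_packing k xs f"
  shows "length xs \<le> k * card (f ` {..<length xs})"
proof -
  have "length xs = (\<Sum>b\<in>f ` {..<length xs}. card {i. i < length xs \<and> f i = b})"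
    using card_eq_sum sum.image_gen[of "{..<length xs}" "\<lambda>_. 1::nat" f] by simp
  also have "\<dots> \<le> (\<Sum>b\<in>f ` {..<length xs}. k)"
    using assms unfolding valid_packing_def by (intro sum_mono) blast
  also have "\<dots> = k * card (f ` {..<length xs})" by simp
  finally show ?thesis .
qed

lemma OPT_le:
  "valid_packing k xs f \<Longrightarrow> OPT k xs \<le> card (f ` {..<length xs})"
  unfolding OPT_def by (rule Least_le) blast

lemma OPT_attained:
  assumes "0 < k" "set xs \<subseteq> {..1}"
  obtains f where "valid_packing k xs f" "card (f ` {..<length xs}) = OPT k xs"
proof -
  have "\<exists>f. valid_packing k xs f \<and> card (f ` {..<length xs}) = OPT k xs"
    unfolding OPT_def by (rule LeastI_ex) (use valid_packing_singletons[OF assms] in blast)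
  then show ?thesis using that by blast
qed

lemma length_le_OPT:
  "0 < k \<Longrightarrow> set xs \<subseteq> {..1} \<Longrightarrow> length xs \<le> k * OPT k xs"
  by (metis OPT_attained length_le_card_bins)

lemma OPT_mset_eq:
  assumes "mset xs = mset ys" "set xs \<subseteq> {0..}"
  shows "OPT k xs = OPT k ys"
proof -
  have "set ys \<subseteq> {0..}" using assms by (metis mset_eq_setD)
  note transfer = valid_packing_mset_eq[OF assms] valid_packing_mset_eq[OF assms(1)[symmetric] this]
  have "(\<exists>f. valid_packing k xs f \<and> card (f ` {..<length xs}) = m)
      \<longleftrightarrow> (\<exists>g. valid_packing k ys g \<and> card (g ` {..<length ys}) = m)" for m
  proof
    assume "\<exists>f. valid_packing k xs f \<and> card (f ` {..<length xs}) = m"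
    then show "\<exists>g. valid_packing k ys g \<and> card (g ` {..<length ys}) = m"
      using transfer(1) by (metis (no_types))
  next
    assume "\<exists>g. valid_packing k ys g \<and> card (g ` {..<length ys}) = m"
    then show "\<exists>f. valid_packing k xs f \<and> card (f ` {..<length xs}) = m"
      using transfer(2) by (metis (no_types))
  qed
  then show ?thesis unfolding OPT_def by simp
qed

lemma OPT_append_bin_le:
  assumes "0 < k" "set ys \<subseteq> {..1}" "zs \<noteq> []" "length zs \<le> k" "sum_list zs \<le> 1"
  shows "OPT k (ys @ zs) \<le> Suc (OPT k ys)"
proof -
  obtain g where g: "valid_packing k ys g" "card (g ` {..<length ys}) = OPT k ys"
    using OPT_attained[OF assms(1,2)] .
  then show ?thesis using valid_packing_append_bin[OF g(1) assms(3-5)] by (metis OPT_le)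
qed

lemma OPT_take_less_bins:
  assumes "valid_packing k (a # r) f" "set (a # r) \<subseteq> {0..}" "m \<le> length r"
    and "\<And>i. i < m \<Longrightarrow> f (Suc i) \<noteq> f 0"
  shows "OPT k (take m r) < card (f ` {..<length (a # r)})"
proof -
  have "valid_packing k (take m r) (f \<circ> Suc)"
    using assms(3) by (intro valid_packing_reindex[OF assms(1,2)]) auto
  then have "OPT k (take m r) \<le> card ((f \<circ> Suc) ` {..<m})"
    using assms(3) by (metis OPT_le length_take min.absorb2)
  also have "\<dots> < card (f ` {..<length (a # r)})"
  proof (rule psubset_card_mono)
    have "(f \<circ> Suc) ` {..<m} \<subseteq> f ` {..<length (a # r)} - {f 0}"
      using assms(3,4) by auto
    moreover have "f 0 \<in> f ` {..<length (a # r)}" by simp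
    ultimately show "(f \<circ> Suc) ` {..<m} \<subset> f ` {..<length (a # r)}" by blast
  qed simp
  finally show ?thesis .
qed

lemma OPT_Cons_alone:
  assumes "0 < k" "set (a # r) \<subseteq> {0..1}" "\<forall>x\<in>set r. 1 < a + x"
  shows "Suc (OPT k r) \<le> OPT k (a # r)"
proof -
  have "set (a # r) \<subseteq> {..1}" using assms(2) by auto
  then obtain f where f: "valid_packing k (a # r) f" "card (f ` {..<length (a # r)}) = OPT k (a # r)"
    by (rule OPT_attained[OF assms(1)])
  have "f (Suc i) \<noteq> f 0" if "i < length r" for i
  proof
    assume "f (Suc i) = f 0"
    then have "(a # r) ! Suc i + (a # r) ! 0 \<le> 1"
      using that assms(2) by (intro valid_packing_pair_le[OF f(1)]) auto
    moreover have "1 < a + r ! i" using assms(3) nth_mem[OF that] by blast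
    ultimately show False by simp
  qed
  moreover have "set (a # r) \<subseteq> {0..}" using assms(2) by auto
  ultimately have "OPT k (take (length r) r) < OPT k (a # r)"
    using OPT_take_less_bins[OF f(1), of "length r"] f(2) by simp
  then show ?thesis by simp
qed

section \<open>Packings with at most two items per bin\<close>

lemma valid_packing_2_no_triple:
  assumes "valid_packing 2 xs f" "i < length xs" "j < length xs" "l < length xs"
    and "i \<noteq> j" "i \<noteq> l" "j \<noteq> l" "f j = f i" "f l = f i"
  shows False
proof -
  have "card {i, j, l} \<le> card {p. p < length xs \<and> f p = f i}"
    using assms(2-4,8,9) by (intro card_mono) auto
  also have "\<dots> \<le> 2" using assms(1) unfolding valid_packing_def by blast
  finally show False using assms(5-7) by simp
qed

lemma valid_packing_2I:
  assumes "set xs \<subseteq> {..1}"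
    and "\<And>b. card {i. i < length xs \<and> f i = b} \<le> 2"
    and "\<And>i j. i < length xs \<Longrightarrow> j < length xs \<Longrightarrow> i \<noteq> j \<Longrightarrow> f i = f j \<Longrightarrow> xs ! i + xs ! j \<le> 1"
  shows "valid_packing 2 xs f"
  unfolding valid_packing_def
proof (intro allI conjI)
  fix b
  let ?B = "{i. i < length xs \<and> f i = b}"
  show "card ?B \<le> 2" by (rule assms(2))
  then consider "card ?B = 0" | "card ?B = 1" | "card ?B = 2" by linarith
  then show "(\<Sum>i\<in>?B. xs ! i) \<le> 1"
  proof cases
    case 1
    then have B: "?B = {}" by (simp add: card_eq_0_iff)
    show ?thesis unfolding B by simp
  next
    case 2
    then obtain p where B: "?B = {p}" by (auto simp: card_1_singleton_iff)
    have "p \<in> ?B" unfolding B by simp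
    then have "xs ! p \<le> 1" using assms(1) by (auto dest: nth_mem)
    then show ?thesis unfolding B by simp
  next
    case 3
    then obtain p q where B: "?B = {p, q}" and "p \<noteq> q" by (auto simp: card_2_iff)
    have "p \<in> ?B" "q \<in> ?B" unfolding B by simp_all
    then have "xs ! p + xs ! q \<le> 1" using assms(3) \<open>p \<noteq> q\<close> by simp
    then show ?thesis unfolding B using \<open>p \<noteq> q\<close> by simp
  qed
qed

lemma valid_packing_2_transpose:
  assumes "valid_packing 2 xs f" "set xs \<subseteq> {0..1}"
    and "j < length xs" "l < length xs" "xs ! l \<le> xs ! j"
    and "\<And>i. i < length xs \<Longrightarrow> i \<noteq> j \<Longrightarrow> xs ! j + xs ! i \<le> 1"
  shows "valid_packing 2 xs (f \<circ> transpose j l)"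
proof (rule valid_packing_2I)
  let ?t = "transpose j l"
  show "set xs \<subseteq> {..1}" using assms(2) by auto
  fix b
  have "{i. i < length xs \<and> (f \<circ> ?t) i = b} = ?t ` {i. i < length xs \<and> f i = b}"
    using assms(3,4) by (auto simp: in_transpose_image_iff transpose_def)
  then have "card {i. i < length xs \<and> (f \<circ> ?t) i = b} = card {i. i < length xs \<and> f i = b}"
    by (simp add: card_image)
  also have "\<dots> \<le> 2" using assms(1) unfolding valid_packing_def by blast
  finally show "card {i. i < length xs \<and> (f \<circ> ?t) i = b} \<le> 2" .
next
  let ?t = "transpose j l"
  fix p q
  assume pq: "p < length xs" "q < length xs" "p \<noteq> q" "(f \<circ> ?t) p = (f \<circ> ?t) q"
  show "xs ! p + xs ! q \<le> 1"
  proof (cases "p = j \<or> q = j")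
    case True
    then show ?thesis
      using assms(6)[of p] assms(6)[of q] pq(1-3) by (cases "p = j") (simp_all add: add.commute)
  next
    case False
    have moved_up: "xs ! i \<le> xs ! ?t i" if "i \<noteq> j" for i
      using assms(5) that by (cases "i = l") auto
    have "?t p < length xs" "?t q < length xs" "?t p \<noteq> ?t q"
      using assms(3,4) pq(1-3) by (auto simp: transpose_def)
    then have "xs ! ?t p + xs ! ?t q \<le> 1"
      using valid_packing_pair_le[OF assms(1)] assms(2) pq(4) by fastforce
    then show ?thesis using moved_up[of p] moved_up[of q] False by linarith
  qed
qed

lemma OPT_2_Cons_butlast:
  assumes "sorted_wrt (\<ge>) (a # r)" "set (a # r) \<subseteq> {0..1}" "r \<noteq> []"
  shows "Suc (OPT 2 (butlast r)) \<le> OPT 2 (a # r)"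
proof -
  let ?xs = "a # r" and ?L = "length r"
  have nonneg: "set ?xs \<subseteq> {0..}" using assms(2) by auto
  have "set ?xs \<subseteq> {..1}" using assms(2) by auto
  with OPT_attained[of 2 ?xs] obtain f
    where f: "valid_packing 2 ?xs f" "card (f ` {..<length ?xs}) = OPT 2 ?xs" by auto
  \<comment> \<open>If the largest item shares its bin with an item j other than the smallest one,
    exchange j and the smallest item: j fits next to the largest item, hence next to any item.\<close>
  obtain g where g: "valid_packing 2 ?xs g" "g ` {..<length ?xs} = f ` {..<length ?xs}"
    and alone: "\<And>i. i < ?L - 1 \<Longrightarrow> g (Suc i) \<noteq> g 0"
  proof (cases "\<exists>j. 0 < j \<and> j < ?L \<and> f j = f 0")
    case False
    show ?thesis
    proof (rule that[OF f(1) refl])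
      fix i assume "i < ?L - 1"
      then have "Suc i < ?L" by linarith
      with False show "f (Suc i) \<noteq> f 0" by blast
    qed
  next
    case True
    then obtain j where j: "0 < j" "j < ?L" "f j = f 0" by blast
    have fixes_0: "transpose j ?L 0 = 0" using j assms(3) by (simp add: transpose_def)
    have "valid_packing 2 ?xs (f \<circ> transpose j ?L)"
    proof (rule valid_packing_2_transpose[OF f(1) assms(2)])
      show "j < length ?xs" "?L < length ?xs" using j by simp_all
      show "?xs ! ?L \<le> ?xs ! j"
        using sorted_wrt_nth_less[OF assms(1), of j ?L] j by simp
      show "?xs ! j + ?xs ! i \<le> 1" if "i < length ?xs" for i
      proof -
        have "?xs ! i \<le> a" using assms(1) nth_mem[OF that] by auto
        moreover have "?xs ! j + a \<le> 1"
          using valid_packing_pair_le[OF f(1) nonneg, of j 0] j by simp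
        ultimately show ?thesis by linarith
      qed
    qed
    moreover have "(f \<circ> transpose j ?L) ` {..<length ?xs} = f ` {..<length ?xs}"
      unfolding image_comp[symmetric] using j by simp
    moreover have "(f \<circ> transpose j ?L) (Suc i) \<noteq> (f \<circ> transpose j ?L) 0" if "i < ?L - 1" for i
    proof (cases "Suc i = j")
      case True
      then show ?thesis using valid_packing_2_no_triple[OF f(1), of 0 j ?L] j fixes_0 assms(3) by auto
    next
      case False
      moreover have "Suc i < ?L" using that by linarith
      ultimately show ?thesis using valid_packing_2_no_triple[OF f(1), of 0 j "Suc i"] j fixes_0 by auto
    qed
    ultimately show ?thesis by (rule that)
  qed
  have "OPT 2 (take (?L - 1) r) < OPT 2 ?xs"
    using OPT_take_less_bins[OF g(1) nonneg _ alone] g(2) f(2) by simp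
  then show ?thesis by (simp add: butlast_conv_take)
qed

section \<open>The algorithm on sorted input\<close>

lemma sorted_wrt_ge_last:
  "sorted_wrt (\<ge>) xs \<Longrightarrow> x \<in> set xs \<Longrightarrow> last xs \<le> (x :: 'a :: linorder)"
proof (induction xs)
  case (Cons a xs)
  then show ?case using last_in_set[of xs] by (cases "xs = []") auto
qed simp

lemma sorted_wrt_tl_butlast:
  assumes "sorted_wrt P xs" "set xs \<subseteq> S"
  shows "sorted_wrt P (tl xs)" "set (tl xs) \<subseteq> S"
    and "sorted_wrt P (butlast xs)" "set (butlast xs) \<subseteq> S"
proof -
  show "sorted_wrt P (tl xs)" using assms(1) by (cases xs) auto
  show "set (tl xs) \<subseteq> S" using assms(2) by (cases xs) auto
  show "sorted_wrt P (butlast xs)" "set (butlast xs) \<subseteq> S"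
    using assms by (auto simp: butlast_conv_take dest: in_set_takeD)
qed

lemma sorted_wrt_sum_le_if_first_two:
  fixes a b c :: real
  assumes "sorted_wrt (\<ge>) (a # b # t)" "a + b \<le> c"
  shows "sorted_wrt (\<lambda>x y. x + y \<le> c) (a # b # t)"
proof -
  have below_b: "\<forall>x\<in>set t. x \<le> b" and "b \<le> a" using assms(1) by auto
  have "sorted_wrt (\<lambda>x y. x + y \<le> c) t"
    by (rule sorted_wrt_mono_rel[of t "(\<ge>)"]) (use assms below_b \<open>b \<le> a\<close> in auto)
  then show ?thesis using below_b \<open>b \<le> a\<close> assms(2) by auto
qed

declare mm_loop.simps [simp del]

abbreviation mm2 :: "real list \<Rightarrow> nat" where
  "mm2 xs \<equiv> mm_loop 2 xs 0 0"

lemma mm2_Nil: "mm2 [] = 0"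
  by (simp add: mm_loop.simps)

lemma mm2_Cons:
  assumes "a \<le> 1"
  shows "mm2 (a # r) =
    (if r = [] then 1
     else if a + hd r \<le> 1 then Suc (mm2 (tl r))
     else if a + last r \<le> 1 then Suc (mm2 (butlast r))
     else Suc (mm2 r))" (is "_ = ?rhs")
proof -
  have full_bin: "mm_loop 2 ys (Suc (Suc 0)) s = (if ys = [] then 1 else Suc (mm2 ys))" for ys s
    by (subst mm_loop.simps) simp
  have "mm2 (a # r) = mm_loop 2 r 1 a" using assms by (subst mm_loop.simps) simp
  also have "\<dots> = ?rhs"
    by (subst mm_loop.simps) (auto simp: full_bin mm2_Nil)
  finally show ?thesis .
qed

lemma mm2_pairwise_fit:
  assumes "sorted_wrt (\<lambda>x y. x + y \<le> 1) xs" "set xs \<subseteq> {..1}"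
  shows "mm2 xs = (length xs + 1) div 2"
  using assms
proof (induction xs rule: induct_list012)
  case 1
  then show ?case by (simp add: mm2_Nil)
next
  case (2 x)
  then show ?case by (simp add: mm2_Cons)
next
  case (3 x y zs)
  then show ?case by (simp add: mm2_Cons)
qed

lemma OPT_2_le_mm2:
  assumes "sorted_wrt (\<ge>) xs" "set xs \<subseteq> {0..1}"
  shows "OPT 2 xs \<le> mm2 xs"
  using assms
proof (induction "length xs" arbitrary: xs rule: less_induct)
  case less
  \<comment> \<open>The first bin zs closed by the algorithm may be moved to the end of the list.\<close>
  have first_bin: "OPT 2 xs \<le> Suc (mm2 ys)"
    if "mset xs = mset (ys @ zs)" "zs \<noteq> []" "length zs \<le> 2" "sum_list zs \<le> 1"
      and "length ys < length xs" "sorted_wrt (\<ge>) ys" "set ys \<subseteq> {0..1}" for ys zs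
  proof -
    have "OPT 2 xs = OPT 2 (ys @ zs)"
      using less.prems(2) by (intro OPT_mset_eq[OF that(1)]) auto
    also have "\<dots> \<le> Suc (OPT 2 ys)" using that by (intro OPT_append_bin_le) auto
    also have "\<dots> \<le> Suc (mm2 ys)" using less.hyps that(5-7) by simp
    finally show ?thesis .
  qed
  show ?case
  proof (cases xs)
    case Nil
    then show ?thesis using OPT_le[OF valid_packing_singletons[of 2 "[]"]] by (simp add: mm2_Nil)
  next
    case (Cons a r)
    then have a: "0 \<le> a" "a \<le> 1" and r: "sorted_wrt (\<ge>) r" "set r \<subseteq> {0..1}"
      using less.prems by auto
    note mm2 = mm2_Cons[OF a(2), of r]
    consider "r = []" | "r \<noteq> []" "a + hd r \<le> 1" | "r \<noteq> []" "\<not> a + hd r \<le> 1" "a + last r \<le> 1"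
      | "r \<noteq> []" "\<not> a + hd r \<le> 1" "\<not> a + last r \<le> 1" by blast
    then show ?thesis
    proof cases
      case 1
      then show ?thesis using first_bin[of "[]" "[a]"] Cons mm2 a by (simp add: mm2_Nil)
    next
      case 2
      then have "mset xs = mset (tl r @ [a, hd r])" using Cons by (cases r) auto
      then show ?thesis
        using first_bin[of "tl r" "[a, hd r]"] 2 Cons mm2 sorted_wrt_tl_butlast[OF r] by simp
    next
      case 3
      then have "mset r = mset (butlast r @ [last r])" by simp
      then have "mset xs = mset (butlast r @ [a, last r])" using Cons by simp
      then show ?thesis
        using first_bin[of "butlast r" "[a, last r]"] 3 Cons mm2 sorted_wrt_tl_butlast[OF r] by simp
    next
      case 4
      then show ?thesis using first_bin[of r "[a]"] Cons mm2 a r by simp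
    qed
  qed
qed

lemma mm2_le_OPT_2:
  assumes "sorted_wrt (\<ge>) xs" "set xs \<subseteq> {0..1}"
  shows "mm2 xs \<le> OPT 2 xs"
  using assms
proof (induction "length xs" arbitrary: xs rule: less_induct)
  case less
  have length_bound: "length xs \<le> 2 * OPT 2 xs" using less.prems(2) by (intro length_le_OPT) auto
  show ?case
  proof (cases xs)
    case Nil
    then show ?thesis by (simp add: mm2_Nil)
  next
    case (Cons a r)
    then have a: "a \<le> 1" and r: "sorted_wrt (\<ge>) r" "set r \<subseteq> {0..1}"
      using less.prems by auto
    note mm2 = mm2_Cons[OF a, of r]
    consider "r = []" | "r \<noteq> []" "a + hd r \<le> 1" | "r \<noteq> []" "\<not> a + hd r \<le> 1" "a + last r \<le> 1"
      | "r \<noteq> []" "\<not> a + hd r \<le> 1" "\<not> a + last r \<le> 1" by blast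
    then show ?thesis
    proof cases
      case 1
      then show ?thesis using length_bound Cons mm2 by simp
    next
      case 2
      then obtain b t where "r = b # t" by (cases r) auto
      then have "xs = a # b # t" using Cons by simp
      then have "sorted_wrt (\<lambda>x y. x + y \<le> 1) xs"
        using less.prems(1) 2 \<open>r = b # t\<close> by (simp only:) (rule sorted_wrt_sum_le_if_first_two, simp_all)
      then have "mm2 xs = (length xs + 1) div 2"
        using less.prems(2) by (intro mm2_pairwise_fit) auto
      then show ?thesis using length_bound by linarith
    next
      case 3
      have "mm2 (butlast r) \<le> OPT 2 (butlast r)"
        using less.hyps[of "butlast r"] sorted_wrt_tl_butlast[OF r] Cons by simp
      moreover have "Suc (OPT 2 (butlast r)) \<le> OPT 2 xs"
        using OPT_2_Cons_butlast[of a r] less.prems 3(1) Cons by simp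
      ultimately show ?thesis using 3 Cons mm2 by simp
    next
      case 4
      have "\<forall>x\<in>set r. 1 < a + x"
        using sorted_wrt_ge_last[OF r(1)] 4(3) by (meson add_le_cancel_left order_trans not_le)
      then have "Suc (OPT 2 r) \<le> OPT 2 xs"
        using OPT_Cons_alone[of 2 a r] less.prems(2) Cons by simp
      moreover have "mm2 r \<le> OPT 2 r" using less.hyps[of r] r Cons by simp
      ultimately show ?thesis using 4 Cons mm2 by simp
    qed
  qed
qed

lemma mm2_eq_OPT_2:
  "sorted_wrt (\<ge>) xs \<Longrightarrow> set xs \<subseteq> {0..1} \<Longrightarrow> mm2 xs = OPT 2 xs"
  by (intro antisym mm2_le_OPT_2 OPT_2_le_mm2)

theorem theorem7:
  fixes I :: "real list"
  assumes "\<forall>x\<in>set I. 0 < x \<and> x \<le> 1"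
  shows "MM 2 I = OPT 2 I"
proof -
  have items: "set (rev (sort I)) \<subseteq> {0..1}" using assms by auto
  have "MM 2 I = OPT 2 (rev (sort I))"
    unfolding MM_def using items by (intro mm2_eq_OPT_2) (simp_all add: sorted_wrt_rev)
  also have "\<dots> = OPT 2 I" using items by (intro OPT_mset_eq) auto
  finally show ?thesis .
qed

end
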